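(* Let $\rho$ be a state of $A$, $\sigma$ a state of $B$, $\eta$ a state of $R$, and $0\le\varepsilon<1/2$. For any $\tilde\eta\in\mathcal{B}_\varepsilon(\eta)$, $$|\Delta H_{\tilde\eta}-\Delta H_\eta|\le\frac{2d_R^2\,\varepsilon}{\ln 2\,(1-2\varepsilon)}.$$ If moreover $\tilde\eta$ is normalized ($\mathrm{tr}\,\tilde\eta=1$), then $|\Delta H_{\tilde\eta}-\Delta H_\eta|\le r(\varepsilon):=\frac{2d_R^2\varepsilon}{\ln 2}$.
   Context: $G$ is a compact group with normalized Haar measure $dg$; finite-dimensional systems $A,B$ carry continuous unitary representations $U_A,U_B$; the reference $R$ has $d_R=d_B$ and carries $U_R(g)=\overline{U_B(g)}$. The $G$-twirl on $RX$ ($X=A,B$) is $\mathcal{G}(M)=\int dg\,(U_R(g)\otimes U_X(g))M(U_R(g)\otimes U_X(g))^\dagger$. For positive $\Omega_{RX}$, $H_{\min}(R|X)_\Omega=-\log_2\inf_{Y\ge0}\{\mathrm{tr}[Y]:\mathbb{1}_R\otimes Y\ge\Omega_{RX}\}$. For a positive operator $\eta$ on $R$ with trace at most one and a state $\tau$ on $X$, $H_\eta(\tau):=H_{\min}(R|X)_{\mathcal{G}(\eta\otimes\tau)}$ and $\Delta H_\eta:=H_\eta(\sigma)-H_\eta(\rho)$. The generalized trace distance is $D(\rho,\sigma)=\tfrac12\|\rho-\sigma\|_1+\tfrac12|\mathrm{tr}\rho-\mathrm{tr}\sigma|$, and $\mathcal{B}_\varepsilon(\eta)=\{\tilde\eta\ge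 0:\mathrm{tr}\tilde\eta\le 1,\ D(\eta,\tilde\eta)\le\varepsilon\}$ is the $\varepsilon$-ball of normalized and subnormalized states. *)

theory Defs
  imports "HOL-Probability.Probability"
begin

text \<open>Finite-dimensional systems are modelled by finite index types; an operator on a
system with index type 'n is a matrix of type complex^'n^'n.  The composite system RX
has index type 'r \<times> 'x.\<close>

type_synonym 'n cmat = "complex^'n^'n"

definition ctrace :: "'n::finite cmat \<Rightarrow> complex" where
  "ctrace M = (\<Sum>i\<in>UNIV. M $ i $ i)"

definition cadj :: "'n::finite cmat \<Rightarrow> 'n cmat" where
  "cadj M = (\<chi> i j. cnj (M $ j $ i))"

definition cconj :: "'n::finite cmat \<Rightarrow> 'n cmat" where
  "cconj M = (\<chi> i j. cnj (M $ i $ j))"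

definition unitary :: "'n::finite cmat \<Rightarrow> bool" where
  "unitary V \<longleftrightarrow> cadj V ** V = mat 1 \<and> V ** cadj V = mat 1"

definition psd :: "'n::finite cmat \<Rightarrow> bool" where
  "psd M \<longleftrightarrow> (\<forall>v::complex^'n.
     (let q = (\<Sum>i\<in>UNIV. \<Sum>j\<in>UNIV. cnj (v $ i) * M $ i $ j * v $ j) in Im q = 0 \<and> Re q \<ge> 0))"

definition is_state :: "'n::finite cmat \<Rightarrow> bool" where
  "is_state \<rho> \<longleftrightarrow> psd \<rho> \<and> ctrace \<rho> = 1"

definition is_subnormalized :: "'n::finite cmat \<Rightarrow> bool" where
  "is_subnormalized \<rho> \<longleftrightarrow> psd \<rho> \<and> Re (ctrace \<rho>) \<le> 1"

definition kron :: "'r::finite cmat \<Rightarrow> 'x::finite cmat \<Rightarrow> ('r \<times> 'x) cmat" where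
  "kron P Q = (\<chi> p q. P $ fst p $ fst q * Q $ snd p $ snd q)"

text \<open>Trace norm, via its variational form \<parallel>X\<parallel>_1 = max over unitaries V of |tr(V X)|.\<close>
definition trace_norm :: "'n::finite cmat \<Rightarrow> real" where
  "trace_norm X = (SUP V\<in>{V. unitary V}. cmod (ctrace (V ** X)))"

definition gen_trace_dist :: "'n::finite cmat \<Rightarrow> 'n cmat \<Rightarrow> real" where
  "gen_trace_dist \<rho> \<sigma> = trace_norm (\<rho> - \<sigma>) / 2 + \<bar>Re (ctrace \<rho>) - Re (ctrace \<sigma>)\<bar> / 2"

definition eps_ball :: "real \<Rightarrow> 'n::finite cmat \<Rightarrow> 'n cmat set" where
  "eps_ball \<epsilon> \<eta> = {\<eta>'. is_subnormalized \<eta>' \<and> gen_trace_dist \<eta> \<eta>' \<le> \<epsilon>}"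

definition compact_group :: "'g::{t2_space, group_add} itself \<Rightarrow> bool" where
  "compact_group _ \<longleftrightarrow> compact (UNIV :: 'g set)
     \<and> continuous_on UNIV (\<lambda>p::'g \<times> 'g. fst p + snd p)
     \<and> continuous_on UNIV (uminus :: 'g \<Rightarrow> 'g)"

definition normalized_haar :: "'g::{t2_space, group_add} measure \<Rightarrow> bool" where
  "normalized_haar M \<longleftrightarrow> space M = UNIV \<and> sets M = sets (borel :: 'g measure)
     \<and> prob_space M \<and> (\<forall>h. distr M M (\<lambda>g. h + g) = M)"

definition unitary_rep :: "('g::{topological_space, group_add} \<Rightarrow> 'n::finite cmat) \<Rightarrow> bool" where
  "unitary_rep U \<longleftrightarrow> (\<forall>g. unitary (U g)) \<and> (\<forall>g h. U (g + h) = U g ** U h)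
     \<and> U 0 = mat 1 \<and> continuous_on UNIV U"

definition twirl :: "'g measure \<Rightarrow> ('g \<Rightarrow> 'r::finite cmat) \<Rightarrow> ('g \<Rightarrow> 'x::finite cmat)
    \<Rightarrow> ('r \<times> 'x) cmat \<Rightarrow> ('r \<times> 'x) cmat" where
  "twirl M UR UX \<Omega> = integral\<^sup>L M (\<lambda>g. kron (UR g) (UX g) ** \<Omega> ** cadj (kron (UR g) (UX g)))"

definition Hmin :: "('r::finite \<times> 'x::finite) cmat \<Rightarrow> real" where
  "Hmin \<Omega> = - log 2 (Inf {Re (ctrace Y) | Y :: 'x cmat. psd Y \<and> psd (kron (mat 1 :: 'r cmat) Y - \<Omega>)})"

definition H_eta :: "'g measure \<Rightarrow> ('g \<Rightarrow> 'r::finite cmat) \<Rightarrow> ('g \<Rightarrow> 'x::finite cmat)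
    \<Rightarrow> 'r cmat \<Rightarrow> 'x cmat \<Rightarrow> real" where
  "H_eta M UR UX \<eta> \<tau> = Hmin (twirl M UR UX (kron \<eta> \<tau>))"

definition Delta_H :: "'g measure \<Rightarrow> ('g \<Rightarrow> 'a::finite cmat) \<Rightarrow> ('g \<Rightarrow> 'b::finite cmat)
    \<Rightarrow> 'b cmat \<Rightarrow> 'a cmat \<Rightarrow> 'b cmat \<Rightarrow> real" where
  "Delta_H M UA UB \<eta> \<rho> \<sigma> =
     H_eta M (\<lambda>g. cconj (UB g)) UB \<eta> \<sigma> - H_eta M (\<lambda>g. cconj (UB g)) UA \<eta> \<rho>"

end

theory Submission
  imports Defs
begin

text \<open>Write f(A) for the least trace of an operator Y on X with 1 \<otimes> Y above the twirl of
  A \<otimes> \<tau>, so that H_A(\<tau>) = -log f(A).  The twirl preserves positivity and trace and maps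
  1 \<otimes> \<tau> to 1 \<otimes> (an averaged state), hence tr A / d_R \<le> f(A), and A \<le> B + c 1 implies
  f(A) \<le> f(B) + c.  As -T 1 \<le> \<eta> - \<eta>' \<le> T 1 for the trace norm T of \<eta> - \<eta>', the
  inequality ln x - ln y \<le> (x - y)/y moves ln f by at most d_R T (1 + 1/tr \<eta>') for \<tau> = \<rho> and
  for \<tau> = \<sigma>.  Membership in the \<epsilon>-ball gives T + |1 - tr \<eta>'| \<le> 2\<epsilon>, which turns this
  into the claimed bound when d_R \<ge> 2; when d_R = 1, f(A) = tr A exactly and \<Delta>H does not move.\<close>

section \<open>Sesquilinear forms and positive matrices\<close>

definition sesq_form :: "'n::finite cmat \<Rightarrow> complex^'n \<Rightarrow> complex^'n \<Rightarrow> complex" where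
  "sesq_form M u v = (\<Sum>i\<in>UNIV. \<Sum>j\<in>UNIV. cnj (u$i) * M$i$j * v$j)"

abbreviation quad_form :: "'n::finite cmat \<Rightarrow> complex^'n \<Rightarrow> complex" where
  "quad_form M v \<equiv> sesq_form M v v"

lemma psd_iff_quad_form: "psd M \<longleftrightarrow> (\<forall>v. Im (quad_form M v) = 0 \<and> 0 \<le> Re (quad_form M v))"
  by (simp add: psd_def sesq_form_def Let_def)

lemma scaleR_cmat_nth [simp]: "(c *\<^sub>R A) $ i $ j = complex_of_real c * (A::'n::finite cmat) $ i $ j"
  unfolding vector_scaleR_component by (rule scaleR_conv_of_real)

lemma sesq_form_add_mat: "sesq_form (A + B) u v = sesq_form A u v + sesq_form B u v"
  by (simp add: sesq_form_def algebra_simps sum.distrib)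

lemma sesq_form_diff_mat: "sesq_form (A - B) u v = sesq_form A u v - sesq_form B u v"
  by (simp add: sesq_form_def algebra_simps sum_subtractf)

lemma sesq_form_scaleR_mat: "sesq_form (c *\<^sub>R A) u v = of_real c * sesq_form A u v"
  unfolding sesq_form_def scaleR_cmat_nth by (simp add: sum_distrib_left algebra_simps)

lemma sesq_form_add_left: "sesq_form A (u + w) v = sesq_form A u v + sesq_form A w v"
  by (simp add: sesq_form_def algebra_simps sum.distrib)

lemma sesq_form_add_right: "sesq_form A u (v + w) = sesq_form A u v + sesq_form A u w"
  by (simp add: sesq_form_def algebra_simps sum.distrib)

lemma sesq_form_scale_left: "sesq_form A (c *s u) v = cnj c * sesq_form A u v"
  by (simp add: sesq_form_def sum_distrib_left algebra_simps)

lemma sesq_form_scale_right: "sesq_form A u (c *s v) = c * sesq_form A u v"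
  by (simp add: sesq_form_def sum_distrib_left algebra_simps)

lemma sesq_form_axis: "sesq_form A (axis i 1) (axis j 1) = A$i$j"
  by (simp add: sesq_form_def axis_def if_distrib if_distribR sum.If_cases)

lemma sesq_form_axis_left: "sesq_form A (axis i 1) v = (\<Sum>j\<in>UNIV. A$i$j * v$j)"
  by (simp add: sesq_form_def axis_def if_distrib if_distribR sum.If_cases)

lemma sesq_form_mat1: "sesq_form (mat 1) u v = (\<Sum>i\<in>UNIV. cnj (u$i) * v$i)"
  by (simp add: sesq_form_def mat_def if_distrib if_distribR sum.If_cases)

lemma sesq_form_mult_right: "sesq_form M u v = sesq_form (mat 1) u (M *v v)"
  unfolding sesq_form_mat1 by (simp add: sesq_form_def matrix_vector_mult_def sum_distrib_left mult_ac)

lemma sesq_form_mat1_adjoint: "sesq_form (mat 1) u (A *v w) = sesq_form (mat 1) (cadj A *v u) w"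
  unfolding sesq_form_mat1 matrix_vector_mult_def cadj_def
  by (simp add: sum_distrib_left sum_distrib_right mult_ac, subst sum.swap, simp add: mult_ac)

lemma quad_form_conj: "quad_form (A ** X ** cadj A) v = quad_form X (cadj A *v v)"
proof -
  have "quad_form (A ** X ** cadj A) v = sesq_form (mat 1) v (A *v (X *v (cadj A *v v)))"
    by (subst sesq_form_mult_right) (simp add: matrix_vector_mul_assoc matrix_mul_assoc)
  also have "\<dots> = quad_form X (cadj A *v v)"
    by (simp only: sesq_form_mat1_adjoint sesq_form_mult_right[of X])
  finally show ?thesis .
qed

lemma psd_add: "psd A \<Longrightarrow> psd B \<Longrightarrow> psd (A + B)"
  by (simp add: psd_iff_quad_form sesq_form_add_mat)

lemma psd_scaleR: "psd A \<Longrightarrow> 0 \<le> c \<Longrightarrow> psd (c *\<^sub>R A)"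
  by (simp add: psd_iff_quad_form sesq_form_scaleR_mat)

lemma psd_zero: "psd 0"
  by (simp add: psd_iff_quad_form sesq_form_def)

lemma psd_sum: "finite S \<Longrightarrow> (\<And>k. k \<in> S \<Longrightarrow> psd (A k)) \<Longrightarrow> psd (\<Sum>k\<in>S. A k)"
  by (induction S rule: finite_induct) (auto simp: psd_zero psd_add)

lemma psd_conj: "psd X \<Longrightarrow> psd (A ** X ** cadj A)"
  unfolding psd_iff_quad_form quad_form_conj by blast

lemma psd_diag: assumes "psd A" shows "Im (A$i$i) = 0" "0 \<le> Re (A$i$i)"
  using assms unfolding psd_iff_quad_form by (metis sesq_form_axis)+

lemma psd_hermitian: assumes "psd A" shows "A$i$j = cnj (A$j$i)"
proof (cases "i = j")
  case True
  then show ?thesis using psd_diag[OF assms, of i] by (simp add: complex_eq_iff)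
next
  case False
  have expand: "quad_form A (axis i 1 + z *s axis j 1)
      = A$i$i + z * A$i$j + cnj z * A$j$i + cnj z * z * A$j$j" for z
    unfolding sesq_form_add_left sesq_form_add_right sesq_form_scale_left sesq_form_scale_right
      sesq_form_axis by (simp add: algebra_simps)
  have "Im (quad_form A (axis i 1 + 1 *s axis j 1)) = 0"
       "Im (quad_form A (axis i 1 + \<i> *s axis j 1)) = 0"
    using assms unfolding psd_iff_quad_form by blast+
  then have "Im (A$i$j + A$j$i) = 0" "Re (A$i$j - A$j$i) = 0"
    unfolding expand using psd_diag[OF assms, of i] psd_diag[OF assms, of j] by auto
  then show ?thesis by (simp add: complex_eq_iff)
qed

lemma sesq_form_hermitian:
  assumes "\<And>i j. A$i$j = cnj (A$j$i)" shows "sesq_form A u v = cnj (sesq_form A v u)"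
proof -
  have conj: "cnj (A$i$j) = A$j$i" for i j by (simp add: assms[of j i])
  have "cnj (sesq_form A v u) = (\<Sum>i\<in>UNIV. \<Sum>j\<in>UNIV. cnj (u$j) * A$j$i * v$i)"
    unfolding sesq_form_def by (simp add: conj mult_ac)
  also have "\<dots> = sesq_form A u v" unfolding sesq_form_def by (rule sum.swap)
  finally show ?thesis by simp
qed

lemma quadratic_nonneg_imp_discriminant:
  fixes a b c :: real
  assumes "\<And>t. 0 \<le> c - 2 * t * b + t^2 * b * a" "0 \<le> b" "0 \<le> a"
  shows "b \<le> a * c"
proof (cases "a = 0")
  case True
  show ?thesis
  proof (rule ccontr)
    assume "\<not> b \<le> a * c"
    then have "b > 0" using True by simp
    have "0 \<le> c - 2 * ((c + 1) / (2 * b)) * b + ((c + 1) / (2 * b))^2 * b * a" by (rule assms(1))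
    also have "\<dots> = -1" using \<open>b > 0\<close> True by (simp add: field_simps)
    finally show False by simp
  qed
next
  case False
  then have "a > 0" using assms by simp
  have "0 \<le> c - 2 * (1 / a) * b + (1 / a)^2 * b * a" by (rule assms(1))
  also have "\<dots> = c - b / a" using \<open>a > 0\<close> by (simp add: field_simps power2_eq_square)
  finally show ?thesis using \<open>a > 0\<close> by (simp add: field_simps mult.commute)
qed

lemma psd_cauchy_schwarz:
  assumes "psd Q"
  shows "(cmod (sesq_form Q (axis s 1) v))^2 \<le> Re (Q$s$s) * Re (quad_form Q v)"
proof -
  define b where "b = sesq_form Q (axis s 1) v"
  define a where "a = Re (Q$s$s)"
  have Qss: "Q$s$s = of_real a" using psd_diag[OF assms, of s] unfolding a_def by (simp add: complex_eq_iff)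
  have bb: "cnj b * b = of_real ((cmod b)^2)" by (metis complex_norm_square mult.commute)
  have b_swap: "sesq_form Q v (axis s 1) = cnj b"
    unfolding b_def by (rule sesq_form_hermitian) (rule psd_hermitian[OF assms])
  have expand: "quad_form Q (v + z *s axis s 1) = quad_form Q v + cnj z * b + z * cnj b + cnj z * z * Q$s$s" for z
    unfolding sesq_form_add_left sesq_form_add_right sesq_form_scale_left sesq_form_scale_right
      sesq_form_axis b_swap b_def by (simp add: algebra_simps)
  have "Re (quad_form Q (v + (- (of_real t * b)) *s axis s 1))
      = Re (quad_form Q v) - 2 * t * (cmod b)^2 + t^2 * (cmod b)^2 * a" for t
  proof -
    have "quad_form Q (v + (- (of_real t * b)) *s axis s 1)
        = quad_form Q v - of_real (2 * t) * (cnj b * b) + of_real (t^2 * a) * (cnj b * b)"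
      unfolding expand Qss by (simp add: algebra_simps power2_eq_square)
    then show ?thesis unfolding bb by simp
  qed
  then have "0 \<le> Re (quad_form Q v) - 2 * t * (cmod b)^2 + t^2 * (cmod b)^2 * a" for t
    using assms unfolding psd_iff_quad_form by metis
  then have "(cmod b)^2 \<le> a * Re (quad_form Q v)"
    by (rule quadratic_nonneg_imp_discriminant) (use psd_diag[OF assms, of s] in \<open>auto simp: a_def\<close>)
  then show ?thesis unfolding a_def b_def .
qed

section \<open>Rank-one decomposition and Kronecker products\<close>

definition outer_prod :: "complex^'n \<Rightarrow> complex^'n^'n" where
  "outer_prod w = (\<chi> i j. w$i * cnj (w$j))"

lemma quad_form_outer_prod:
  "quad_form (outer_prod w) v = of_real ((cmod (\<Sum>j\<in>UNIV. cnj (w$j) * v$j))^2)"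
proof -
  define x where "x = (\<Sum>j\<in>UNIV. cnj (w$j) * v$j)"
  have "quad_form (outer_prod w) v = cnj x * x"
    unfolding sesq_form_def outer_prod_def x_def
    by (simp add: sum_product, subst sum.swap, simp add: mult_ac, rule sum.swap)
  also have "\<dots> = of_real ((cmod x)^2)" by (metis complex_norm_square mult.commute)
  finally show ?thesis unfolding x_def .
qed

lemma outer_prod_zero [simp]: "outer_prod 0 = 0"
  by (simp add: outer_prod_def vec_eq_iff)

lemma psd_zero_diag_imp_zero_row:
  assumes "psd Q" "Q$s$s = 0"
  shows "Q$s$j = 0" "Q$j$s = 0"
proof -
  have "(cmod (sesq_form Q (axis s 1) (axis j 1)))^2 \<le> Re (Q$s$s) * Re (quad_form Q (axis j 1))"
    by (rule psd_cauchy_schwarz[OF assms(1)])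
  then show "Q$s$j = 0" using assms(2) unfolding sesq_form_axis by simp
  then show "Q$j$s = 0" using psd_hermitian[OF assms(1), of j s] by simp
qed

text \<open>One step of a Cholesky factorisation.\<close>
lemma psd_diff_outer_prod_column:
  fixes Q :: "'n::finite cmat"
  assumes psd: "psd Q" and pos: "0 < Re (Q$s$s)"
  defines "w \<equiv> \<chi> i. Q$i$s / of_real (sqrt (Re (Q$s$s)))"
  shows "psd (Q - outer_prod w)" "outer_prod w $ i $ j = Q$i$s * Q$s$j / Q$s$s"
proof -
  define a where "a = Re (Q$s$s)"
  have Qss: "Q$s$s = of_real a" using psd_diag[OF psd, of s] unfolding a_def by (simp add: complex_eq_iff)
  have row: "cnj (Q$j$s) = Q$s$j" for j using psd_hermitian[OF psd, of s j] by simp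
  have sqrt_sq: "(of_real (sqrt a) * of_real (sqrt a) :: complex) = of_real a"
    using pos unfolding a_def by (simp flip: of_real_mult)
  have "outer_prod w $ i $ j = Q$i$s * cnj (Q$j$s) / (of_real (sqrt a) * of_real (sqrt a))"
    unfolding outer_prod_def w_def a_def[symmetric] by simp
  then show "outer_prod w $ i $ j = Q$i$s * Q$s$j / Q$s$s"
    unfolding row sqrt_sq Qss .
  show "psd (Q - outer_prod w)"
    unfolding psd_iff_quad_form
  proof
    fix v
    define b where "b = sesq_form Q (axis s 1) v"
    have "(\<Sum>j\<in>UNIV. cnj (w$j) * v$j) = b / of_real (sqrt a)"
      unfolding b_def sesq_form_axis_left w_def a_def[symmetric] by (simp add: row sum_divide_distrib)
    then have "quad_form (outer_prod w) v = of_real ((cmod b)^2 / a)"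
      unfolding quad_form_outer_prod using pos by (simp add: a_def norm_divide power_divide)
    moreover have "(cmod b)^2 / a \<le> Re (quad_form Q v)"
      using psd_cauchy_schwarz[OF psd, of s v] pos unfolding a_def b_def by (simp add: field_simps)
    ultimately show "Im (quad_form (Q - outer_prod w) v) = 0 \<and> 0 \<le> Re (quad_form (Q - outer_prod w) v)"
      using psd unfolding psd_iff_quad_form sesq_form_diff_mat by simp
  qed
qed

lemma psd_supported_eq_sum_outer_prod:
  assumes "finite S" "psd Q" "\<And>i j. i \<notin> S \<or> j \<notin> S \<Longrightarrow> Q$i$j = 0"
  shows "\<exists>W. Q = (\<Sum>k\<in>S. outer_prod (W k))"
  using assms
proof (induction S arbitrary: Q rule: finite_induct)
  case empty
  then show ?case by (auto simp: vec_eq_iff)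
next
  case (insert s S)
  show ?case
  proof (cases "Q$s$s = 0")
    case True
    have "Q$i$j = 0" if "i \<notin> S \<or> j \<notin> S" for i j
      using that insert.prems psd_zero_diag_imp_zero_row[OF insert.prems(1) True]
      by (cases "i = s"; cases "j = s") auto
    then obtain W where W: "Q = (\<Sum>k\<in>S. outer_prod (W k))" using insert.IH insert.prems(1) by blast
    have "Q = (\<Sum>k\<in>insert s S. outer_prod ((W(s := 0)) k))"
      unfolding W using insert.hyps by simp (intro sum.cong, auto)
    then show ?thesis by blast
  next
    case False
    then have pos: "0 < Re (Q$s$s)"
      using psd_diag[OF insert.prems(1), of s] by (simp add: complex_eq_iff less_eq_real_def)
    define w where "w = (\<chi> i. Q$i$s / of_real (sqrt (Re (Q$s$s))))"
    note step = psd_diff_outer_prod_column[OF insert.prems(1) pos, folded w_def]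
    have "(Q - outer_prod w)$i$j = 0" if "i \<notin> S \<or> j \<notin> S" for i j
      using that insert.prems(2)[of i s] insert.prems(2)[of s j] insert.prems(2)[of i j] False
      by (cases "i = s"; cases "j = s") (auto simp: step(2))
    then obtain W where W: "Q - outer_prod w = (\<Sum>k\<in>S. outer_prod (W k))"
      using insert.IH step(1) by blast
    have "(\<Sum>k\<in>insert s S. outer_prod ((W(s := w)) k)) = outer_prod w + (Q - outer_prod w)"
      unfolding W using insert.hyps by simp (intro sum.cong, auto)
    then have "Q = (\<Sum>k\<in>insert s S. outer_prod ((W(s := w)) k))" by simp
    then show ?thesis by blast
  qed
qed

lemma psd_eq_sum_outer_prod:
  "psd (Q::'n::finite cmat) \<Longrightarrow> \<exists>W::'n \<Rightarrow> complex^'n. Q = (\<Sum>k\<in>UNIV. outer_prod (W k))"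
  using psd_supported_eq_sum_outer_prod[of UNIV Q] by auto

lemma sum_UNIV_prod:
  "(\<Sum>p\<in>(UNIV::('a::finite \<times> 'b::finite) set). f p) = (\<Sum>i\<in>UNIV. \<Sum>k\<in>UNIV. f (i, k))"
  by (simp add: sum.cartesian_product)

lemma kron_add_left: "kron (A + A') B = kron A B + kron A' B"
  by (simp add: kron_def vec_eq_iff algebra_simps)

lemma kron_diff_left: "kron (A - A') B = kron A B - kron A' B"
  by (simp add: kron_def vec_eq_iff algebra_simps)

lemma kron_scaleR_left: "kron (c *\<^sub>R A) B = c *\<^sub>R kron A B"
  by (simp add: kron_def vec_eq_iff mult_ac del: vector_scaleR_component)

lemma kron_add_right: "kron A (B + B') = kron A B + kron A B'"
  by (simp add: kron_def vec_eq_iff algebra_simps)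

lemma kron_scaleR_right: "kron A (c *\<^sub>R B) = c *\<^sub>R kron A B"
  by (simp add: kron_def vec_eq_iff mult_ac del: vector_scaleR_component)

lemma kron_sum_left: "finite S \<Longrightarrow> kron (\<Sum>k\<in>S. A k) B = (\<Sum>k\<in>S. kron (A k) B)"
  by (induction S rule: finite_induct) (simp add: kron_def vec_eq_iff, simp add: kron_add_left)

lemma kron_mult: "kron A B ** kron C D = kron (A ** C) (B ** D)"
  by (simp add: vec_eq_iff matrix_matrix_mult_def kron_def sum_UNIV_prod sum_product mult_ac)

lemma cadj_kron: "cadj (kron A B) = kron (cadj A) (cadj B)"
  by (simp add: vec_eq_iff cadj_def kron_def)

lemma kron_mat1: "kron (mat 1 :: 'a::finite cmat) (mat 1 :: 'b::finite cmat) = mat 1"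
  by (simp add: vec_eq_iff kron_def mat_def prod_eq_iff)

lemma ctrace_kron: "ctrace (kron A B) = ctrace A * ctrace B"
  by (simp add: ctrace_def kron_def sum_UNIV_prod sum_product)

text \<open>The quadratic form of a rank-one tensor w w* \<otimes> \<tau> at v is that of \<tau> at the partial
  contraction of v with w.\<close>
lemma psd_kron_outer_prod:
  fixes w :: "complex^'r::finite" and \<tau> :: "'x::finite cmat"
  assumes "psd \<tau>"
  shows "psd (kron (outer_prod w) \<tau>)"
  unfolding psd_iff_quad_form
proof
  fix v :: "complex^('r \<times> 'x)"
  define x where "x = (\<chi> l. \<Sum>j\<in>UNIV. cnj (w$j) * v$(j, l))"
  have "quad_form (kron (outer_prod w) \<tau>) v =
      (\<Sum>i\<in>UNIV. \<Sum>k\<in>UNIV. \<Sum>j\<in>UNIV. \<Sum>l\<in>UNIV. cnj (v$(i, k)) * w$i * cnj (w$j) * \<tau>$k$l * v$(j, l))"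
    unfolding sesq_form_def sum_UNIV_prod by (simp add: kron_def outer_prod_def mult_ac)
  also have "\<dots> = (\<Sum>k\<in>UNIV. \<Sum>l\<in>UNIV. \<Sum>i\<in>UNIV. \<Sum>j\<in>UNIV. cnj (v$(i, k)) * w$i * cnj (w$j) * \<tau>$k$l * v$(j, l))"
    by (subst sum.swap, subst (2) sum.swap) (intro sum.cong refl, rule sum.swap)
  also have "\<dots> = quad_form \<tau> x"
    unfolding sesq_form_def x_def by (simp add: sum_distrib_left sum_distrib_right mult_ac)
  finally show "Im (quad_form (kron (outer_prod w) \<tau>) v) = 0 \<and> 0 \<le> Re (quad_form (kron (outer_prod w) \<tau>) v)"
    using assms unfolding psd_iff_quad_form by simp
qed

lemma psd_kron:
  fixes D :: "'r::finite cmat" and \<tau> :: "'x::finite cmat"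
  assumes "psd D" "psd \<tau>"
  shows "psd (kron D \<tau>)"
proof -
  obtain W :: "'r \<Rightarrow> complex^'r" where "D = (\<Sum>k\<in>UNIV. outer_prod (W k))"
    using psd_eq_sum_outer_prod[OF assms(1)] by blast
  then have "kron D \<tau> = (\<Sum>k\<in>UNIV. kron (outer_prod (W k)) \<tau>)" by (simp add: kron_sum_left)
  then show ?thesis by (simp add: psd_sum psd_kron_outer_prod assms(2))
qed

section \<open>Adjoints, traces and the trace norm\<close>

lemma cadj_cconj: "cadj (cconj A) = cconj (cadj A)"
  by (simp add: vec_eq_iff cadj_def cconj_def)

lemma cconj_mult: "cconj (A ** B) = cconj A ** cconj B"
  by (simp add: vec_eq_iff cconj_def matrix_matrix_mult_def)

lemma cconj_mat1: "cconj (mat 1) = mat 1"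
  by (simp add: vec_eq_iff cconj_def mat_def)

lemma cadj_mat1: "cadj (mat 1 :: 'n::finite cmat) = mat 1"
  by (simp add: vec_eq_iff cadj_def mat_def)

lemma cadj_diff: "cadj (A - B) = cadj A - cadj B"
  by (simp add: vec_eq_iff cadj_def)

lemma cadj_scaleR: "cadj (c *\<^sub>R A) = c *\<^sub>R cadj A"
  by (simp add: vec_eq_iff cadj_def del: vector_scaleR_component)

lemma cadj_outer_prod: "cadj (outer_prod v) = outer_prod v"
  by (simp add: vec_eq_iff cadj_def outer_prod_def mult.commute)

lemma unitary_mat1: "unitary (mat 1 :: 'n::finite cmat)"
  by (simp add: unitary_def cadj_mat1)

lemma unitary_kron: "unitary A \<Longrightarrow> unitary B \<Longrightarrow> unitary (kron A B)"
  unfolding unitary_def by (simp add: cadj_kron kron_mult kron_mat1)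

lemma unitary_cconj: "unitary A \<Longrightarrow> unitary (cconj A)"
  unfolding unitary_def by (metis cadj_cconj cconj_mult cconj_mat1)

lemma matrix_mult_diff_left: "((A::'n::finite cmat) - B) ** C = A ** C - B ** C"
  by (simp add: matrix_matrix_mult_def vec_eq_iff algebra_simps sum_subtractf)

lemma matrix_mult_diff_right: "(A::'n::finite cmat) ** (B - C) = A ** B - A ** C"
  by (simp add: matrix_matrix_mult_def vec_eq_iff algebra_simps sum_subtractf)

lemma matrix_mult_add_left: "((A::'n::finite cmat) + B) ** C = A ** C + B ** C"
  by (simp add: matrix_matrix_mult_def vec_eq_iff algebra_simps sum.distrib)

lemma matrix_mult_scaleR_left: "(c *\<^sub>R (A::'n::finite cmat)) ** B = c *\<^sub>R (A ** B)"
  by (simp add: matrix_matrix_mult_def vec_eq_iff sum_distrib_left mult_ac scaleR_conv_of_real[where 'a=complex])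

lemma matrix_mult_scaleR_right: "(A::'n::finite cmat) ** (c *\<^sub>R B) = c *\<^sub>R (A ** B)"
  by (simp add: matrix_matrix_mult_def vec_eq_iff sum_distrib_left mult_ac scaleR_conv_of_real[where 'a=complex])

lemma ctrace_add: "ctrace (A + B) = ctrace A + ctrace B"
  by (simp add: ctrace_def sum.distrib)

lemma ctrace_diff: "ctrace (A - B) = ctrace A - ctrace B"
  by (simp add: ctrace_def sum_subtractf)

lemma ctrace_scaleR: "ctrace (c *\<^sub>R A) = of_real c * ctrace A"
  by (simp add: ctrace_def sum_distrib_left del: vector_scaleR_component)

lemma ctrace_mat1: "ctrace (mat 1 :: 'n::finite cmat) = of_nat CARD('n)"
  by (simp add: ctrace_def mat_def)

lemma ctrace_comm: "ctrace ((A::'n::finite cmat) ** B) = ctrace (B ** A)"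
  unfolding ctrace_def matrix_matrix_mult_def by (simp, subst sum.swap, simp add: mult.commute)

lemma ctrace_unitary_conj: "unitary A \<Longrightarrow> ctrace (A ** X ** cadj A) = ctrace X"
  unfolding unitary_def by (metis ctrace_comm matrix_mul_assoc matrix_mul_lid)

lemma ctrace_outer_prod_mult: "ctrace (outer_prod v ** X) = quad_form X v"
  unfolding ctrace_def matrix_matrix_mult_def outer_prod_def sesq_form_def
  by (simp add: sum_distrib_left sum_distrib_right mult_ac, subst sum.swap, simp add: mult_ac)

lemma psd_ctrace_nonneg: "psd Z \<Longrightarrow> 0 \<le> Re (ctrace Z)"
  unfolding ctrace_def by (simp add: sum_nonneg psd_diag)

lemma psd_eq_ctrace_scalar_of_card_1:
  assumes "CARD('n::finite) = 1" "psd (A::'n cmat)"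
  shows "A = Re (ctrace A) *\<^sub>R mat 1"
proof -
  obtain a :: 'n where UNIV_eq: "UNIV = {a}" using assms(1) card_1_singletonE by blast
  then have all_a: "i = a" for i :: 'n by blast
  have "ctrace A = A$a$a" unfolding ctrace_def UNIV_eq by simp
  then have "A$i$j = (Re (ctrace A) *\<^sub>R mat 1) $ i $ j" for i j
    using psd_diag(1)[OF assms(2), of a] unfolding all_a[of i] all_a[of j]
    by (simp add: mat_def complex_eq_iff)
  then show ?thesis by (simp add: vec_eq_iff)
qed

lemma unitary_entry_bound:
  assumes "unitary (V::'n::finite cmat)" shows "cmod (V$i$j) \<le> 1"
proof -
  have "(cadj V ** V) $ j $ j = 1" using assms unfolding unitary_def by (simp add: mat_def)
  then have "(\<Sum>k\<in>UNIV. cnj (V$k$j) * V$k$j) = 1"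
    by (simp add: matrix_matrix_mult_def cadj_def)
  moreover have "cnj (V$k$j) * V$k$j = of_real ((cmod (V$k$j))^2)" for k
    by (metis complex_norm_square mult.commute)
  ultimately have "complex_of_real (\<Sum>k\<in>UNIV. (cmod (V$k$j))^2) = 1"
    unfolding of_real_sum by simp
  then have "(\<Sum>k\<in>UNIV. (cmod (V$k$j))^2) = 1" by (simp only: of_real_eq_1_iff)
  moreover have "(cmod (V$i$j))^2 \<le> (\<Sum>k\<in>UNIV. (cmod (V$k$j))^2)"
    by (rule member_le_sum) auto
  ultimately show ?thesis by (simp add: power_le_one_iff abs_square_le_1)
qed

lemma cmod_ctrace_unitary_mult_le:
  assumes "unitary (V::'n::finite cmat)"
  shows "cmod (ctrace (V ** X)) \<le> (\<Sum>i\<in>UNIV. \<Sum>k\<in>UNIV. cmod (X$k$i))"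
proof -
  have "cmod (ctrace (V ** X)) = cmod (\<Sum>i\<in>UNIV. \<Sum>k\<in>UNIV. V$i$k * X$k$i)"
    by (simp add: ctrace_def matrix_matrix_mult_def)
  also have "\<dots> \<le> (\<Sum>i\<in>UNIV. \<Sum>k\<in>UNIV. cmod (V$i$k * X$k$i))"
    by (intro order_trans[OF norm_sum] sum_mono norm_sum)
  also have "\<dots> \<le> (\<Sum>i\<in>UNIV. \<Sum>k\<in>UNIV. cmod (X$k$i))"
    by (intro sum_mono) (simp add: norm_mult mult_left_le_one_le unitary_entry_bound[OF assms])
  finally show ?thesis .
qed

lemma cmod_ctrace_unitary_mult_le_trace_norm:
  assumes "unitary V" shows "cmod (ctrace (V ** X)) \<le> trace_norm X"
  unfolding trace_norm_def
proof (rule cSUP_upper)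
  show "V \<in> {V. unitary V}" using assms by simp
  show "bdd_above ((\<lambda>V. cmod (ctrace (V ** X))) ` {V. unitary V})"
    by (rule bdd_aboveI2[where M="\<Sum>i\<in>UNIV. \<Sum>k\<in>UNIV. cmod (X$k$i)"])
      (auto intro: cmod_ctrace_unitary_mult_le)
qed

lemma cmod_ctrace_le_trace_norm: "cmod (ctrace X) \<le> trace_norm X"
  using cmod_ctrace_unitary_mult_le_trace_norm[OF unitary_mat1, of X] by simp

lemma trace_norm_nonneg: "0 \<le> trace_norm X"
  using cmod_ctrace_le_trace_norm[of X] norm_ge_zero order_trans by blast

definition vec_norm_sq :: "complex^'n::finite \<Rightarrow> real" where
  "vec_norm_sq v = (\<Sum>i\<in>UNIV. (cmod (v$i))^2)"

lemma quad_form_mat1: "quad_form (mat 1) v = of_real (vec_norm_sq v)"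
proof -
  have "cnj (v$i) * v$i = of_real ((cmod (v$i))^2)" for i by (metis complex_norm_square mult.commute)
  then show ?thesis unfolding sesq_form_mat1 vec_norm_sq_def by simp
qed

lemma psd_mat1: "psd (mat 1)"
  by (simp add: psd_iff_quad_form quad_form_mat1 vec_norm_sq_def sum_nonneg)

lemma outer_prod_mult_self: "outer_prod v ** outer_prod v = vec_norm_sq v *\<^sub>R outer_prod v"
proof -
  have "cnj (v$i) * v$i = of_real ((cmod (v$i))^2)" for i by (metis complex_norm_square mult.commute)
  then have "(\<Sum>k\<in>UNIV. cnj (v$k) * v$k) = of_real (vec_norm_sq v)" unfolding vec_norm_sq_def by simp
  moreover have "(outer_prod v ** outer_prod v) $ i $ j = (\<Sum>k\<in>UNIV. cnj (v$k) * v$k) * outer_prod v $ i $ j" for i j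
    by (simp add: matrix_matrix_mult_def outer_prod_def sum_distrib_left sum_distrib_right mult_ac)
  ultimately show ?thesis by (simp add: vec_eq_iff scaleR_conv_of_real[where 'a=complex])
qed

lemma vec_norm_sq_pos: "v \<noteq> 0 \<Longrightarrow> 0 < vec_norm_sq v"
proof -
  assume "v \<noteq> 0"
  then obtain i where "v$i \<noteq> 0" by (auto simp: vec_eq_iff)
  then have "0 < (cmod (v$i))^2" by simp
  then show ?thesis
    unfolding vec_norm_sq_def by (rule sum_pos2[OF finite_class.finite_UNIV UNIV_I]) simp
qed

lemma unitary_reflection:
  assumes "v \<noteq> 0"
  shows "unitary ((2 / vec_norm_sq v) *\<^sub>R outer_prod v - mat 1)"
proof -
  define a where "a = 2 / vec_norm_sq v"
  define V where "V = a *\<^sub>R outer_prod v - mat 1"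
  have "V ** V = (a *\<^sub>R outer_prod v) ** (a *\<^sub>R outer_prod v) - a *\<^sub>R outer_prod v
      - (a *\<^sub>R outer_prod v - mat 1)"
    unfolding V_def matrix_mult_diff_left matrix_mult_diff_right matrix_mul_lid matrix_mul_rid ..
  also have "(a *\<^sub>R outer_prod v) ** (a *\<^sub>R outer_prod v) = (a * (a * vec_norm_sq v)) *\<^sub>R outer_prod v"
    by (simp only: matrix_mult_scaleR_left matrix_mult_scaleR_right outer_prod_mult_self scaleR_scaleR)
  also have "a * (a * vec_norm_sq v) = a + a"
    using vec_norm_sq_pos[OF assms] unfolding a_def by (simp add: field_simps)
  also have "(a + a) *\<^sub>R outer_prod v = a *\<^sub>R outer_prod v + a *\<^sub>R outer_prod v"
    by (rule scaleR_left_distrib)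
  finally have "V ** V = mat 1" by simp
  moreover have "cadj V = V" unfolding V_def by (simp add: cadj_diff cadj_scaleR cadj_outer_prod cadj_mat1)
  ultimately show ?thesis unfolding unitary_def V_def a_def by simp
qed

text \<open>Test the variational definition of the trace norm against the reflection through v.\<close>
lemma abs_quad_form_le_trace_norm:
  assumes herm: "\<And>v. Im (quad_form X v) = 0"
  shows "\<bar>Re (quad_form X v)\<bar> \<le> trace_norm X * vec_norm_sq v"
proof (cases "v = 0")
  case True
  then show ?thesis by (simp add: sesq_form_def vec_norm_sq_def)
next
  case False
  note npos = vec_norm_sq_pos[OF False]
  define a where "a = 2 / vec_norm_sq v"
  define V where "V = a *\<^sub>R outer_prod v - mat 1"
  have unitary_V: "unitary V" unfolding V_def a_def by (rule unitary_reflection[OF False])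
  define q where "q = Re (quad_form X v)"
  define t where "t = Re (ctrace X)"
  have "Im (X$j$j) = 0" for j using herm[of "axis j 1"] by (simp add: sesq_form_axis)
  then have "Im (ctrace X) = 0" by (simp add: ctrace_def)
  then have "ctrace (V ** X) = of_real (a * q - t)" "ctrace X = of_real t"
    using herm[of v] unfolding V_def q_def t_def
    by (simp_all add: matrix_mult_diff_left matrix_mult_scaleR_left ctrace_diff ctrace_scaleR
        ctrace_outer_prod_mult complex_eq_iff)
  then have "\<bar>a * q - t\<bar> \<le> trace_norm X" "\<bar>t\<bar> \<le> trace_norm X"
    using cmod_ctrace_unitary_mult_le_trace_norm[OF unitary_V, of X] cmod_ctrace_le_trace_norm[of X]
    by (metis norm_of_real)+
  moreover have "\<bar>a * q\<bar> \<le> \<bar>a * q - t\<bar> + \<bar>t\<bar>" by linarith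
  moreover have "\<bar>a * q\<bar> = a * \<bar>q\<bar>" using npos unfolding a_def by (simp add: abs_mult)
  ultimately have "a * \<bar>q\<bar> \<le> 2 * trace_norm X" by linarith
  then show ?thesis using npos unfolding a_def q_def by (simp add: field_simps)
qed

lemma psd_trace_norm_shift:
  assumes herm: "\<And>v. Im (quad_form X v) = 0"
  shows "psd (trace_norm X *\<^sub>R mat 1 - X)" "psd (trace_norm X *\<^sub>R mat 1 + X)"
  unfolding psd_iff_quad_form sesq_form_diff_mat sesq_form_add_mat sesq_form_scaleR_mat quad_form_mat1
  using herm abs_quad_form_le_trace_norm[OF herm] by (simp_all add: abs_le_iff) (smt (verit))+

section \<open>Averaging over a compact group\<close>

lemma continuous_on_kron:
  assumes "continuous_on S A" "continuous_on S B"
  shows "continuous_on S (\<lambda>g. kron (A g) (B g))"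
proof -
  have "(\<lambda>g. kron (A g) (B g)) = (\<lambda>g. \<chi> p q. A g $ fst p $ fst q * B g $ snd p $ snd q)"
    by (simp add: fun_eq_iff kron_def)
  then show ?thesis by (simp only:) (intro continuous_intros continuous_on_component assms)
qed

lemma continuous_on_conj:
  assumes "continuous_on S K"
  shows "continuous_on S (\<lambda>g. K g ** X ** cadj (K g))"
proof -
  have "(\<lambda>g. K g ** X ** cadj (K g))
      = (\<lambda>g. \<chi> i j. \<Sum>k\<in>UNIV. (\<Sum>l\<in>UNIV. K g$i$l * X$l$k) * cnj (K g$j$k))"
    by (simp add: fun_eq_iff vec_eq_iff matrix_matrix_mult_def cadj_def)
  then show ?thesis by (simp only:) (intro continuous_intros continuous_on_component assms)
qed

lemma unitary_rep_cconj:
  assumes "unitary_rep U" shows "unitary_rep (\<lambda>g. cconj (U g))"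
proof -
  have "continuous_on UNIV (\<lambda>g. cconj (U g))"
    using assms unfolding unitary_rep_def cconj_def by (intro continuous_intros continuous_on_component) auto
  then show ?thesis
    using assms unfolding unitary_rep_def by (simp add: unitary_cconj cconj_mult cconj_mat1)
qed

definition conj_average :: "'g measure \<Rightarrow> ('g \<Rightarrow> 'n::finite cmat) \<Rightarrow> 'n cmat \<Rightarrow> 'n cmat" where
  "conj_average M K X = integral\<^sup>L M (\<lambda>g. K g ** X ** cadj (K g))"

lemma twirl_eq_conj_average: "twirl M UR UX = conj_average M (\<lambda>g. kron (UR g) (UX g))"
  by (simp add: fun_eq_iff twirl_def conj_average_def)

locale compact_borel_prob = prob_space M for M :: "'g::topological_space measure" +
  assumes sets_eq_borel: "sets M = sets borel" and compact_UNIV: "compact (UNIV :: 'g set)"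
begin

lemma integrable_continuous:
  fixes h :: "'g \<Rightarrow> 'n::finite cmat"
  assumes "continuous_on UNIV h"
  shows "integrable M h"
proof -
  have "h \<in> borel_measurable M"
    using borel_measurable_continuous_onI[OF assms] measurable_cong_sets[OF sets_eq_borel refl] by blast
  moreover obtain B where "\<And>x. x \<in> range h \<Longrightarrow> norm x \<le> B"
    using compact_imp_bounded[OF compact_continuous_image[OF assms compact_UNIV]] bounded_iff by metis
  ultimately show ?thesis by (intro integrable_const_bound[where B=B]) auto
qed

context
  fixes K :: "'g \<Rightarrow> 'n::finite cmat"
  assumes K_cont: "continuous_on UNIV K" and K_unitary: "\<And>g. unitary (K g)"
begin

lemma integrable_conj: "integrable M (\<lambda>g. K g ** X ** cadj (K g))"
  by (rule integrable_continuous[OF continuous_on_conj[OF K_cont]])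

lemma conj_average_add: "conj_average M K (X + Y) = conj_average M K X + conj_average M K Y"
  by (simp add: conj_average_def matrix_add_ldistrib matrix_mult_add_left integrable_conj)

lemma conj_average_diff: "conj_average M K (X - Y) = conj_average M K X - conj_average M K Y"
  by (simp add: conj_average_def matrix_mult_diff_right matrix_mult_diff_left integrable_conj)

lemma conj_average_scaleR: "conj_average M K (c *\<^sub>R X) = c *\<^sub>R conj_average M K X"
  by (simp add: conj_average_def matrix_mult_scaleR_right matrix_mult_scaleR_left)

lemma conj_average_commute_bounded_linear:
  "bounded_linear f \<Longrightarrow> f (conj_average M K X) = integral\<^sup>L M (\<lambda>g. f (K g ** X ** cadj (K g)))"
  unfolding conj_average_def by (rule integral_bounded_linear[OF _ integrable_conj, symmetric])

lemma psd_conj_average: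
  assumes "psd X" shows "psd (conj_average M K X)"
  unfolding psd_iff_quad_form
proof
  fix v :: "complex^'n"
  define f where "f g = Re (quad_form (K g ** X ** cadj (K g)) v)" for g
  have "bounded_linear (\<lambda>Z. quad_form Z v)"
    by (intro linear_conv_bounded_linear[THEN iffD1] linearI)
      (simp_all add: sesq_form_add_mat sesq_form_scaleR_mat scaleR_conv_of_real[where 'a=complex])
  then have "quad_form (conj_average M K X) v = integral\<^sup>L M (\<lambda>g. quad_form (K g ** X ** cadj (K g)) v)"
    by (rule conj_average_commute_bounded_linear)
  also have "\<dots> = of_real (integral\<^sup>L M f)"
  proof -
    have "quad_form (K g ** X ** cadj (K g)) v = of_real (f g)" for g
      using psd_conj[OF assms, of "K g"] unfolding psd_iff_quad_form f_def by (simp add: complex_eq_iff)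
    then show ?thesis by simp
  qed
  finally show "Im (quad_form (conj_average M K X) v) = 0 \<and> 0 \<le> Re (quad_form (conj_average M K X) v)"
    using psd_conj[OF assms] by (simp add: integral_nonneg_AE f_def psd_iff_quad_form)
qed

lemma ctrace_conj_average: "ctrace (conj_average M K X) = ctrace X"
proof -
  have "bounded_linear (ctrace :: 'n cmat \<Rightarrow> complex)"
    by (intro linear_conv_bounded_linear[THEN iffD1] linearI)
      (simp_all add: ctrace_add ctrace_scaleR scaleR_conv_of_real[where 'a=complex])
  then show ?thesis
    by (simp add: conj_average_commute_bounded_linear ctrace_unitary_conj K_unitary prob_space)
qed

end

end

section \<open>Least dominating trace\<close>

definition min_trace :: "('r::finite \<times> 'x::finite) cmat \<Rightarrow> real" where
  "min_trace \<Omega> = Inf {Re (ctrace Y) | Y :: 'x cmat. psd Y \<and> psd (kron (mat 1 :: 'r cmat) Y - \<Omega>)}"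

lemma Hmin_eq_min_trace: "Hmin \<Omega> = - log 2 (min_trace \<Omega>)"
  by (simp add: Hmin_def min_trace_def)

lemma ctrace_le_of_dominated:
  assumes "psd (kron (mat 1 :: 'r::finite cmat) Y - \<Omega>)"
  shows "Re (ctrace \<Omega>) / CARD('r) \<le> Re (ctrace Y)"
  using psd_ctrace_nonneg[OF assms] by (simp add: ctrace_diff ctrace_kron ctrace_mat1 field_simps)

lemma exists_dominating:
  fixes \<Omega> :: "('r::finite \<times> 'x::finite) cmat"
  assumes herm: "\<And>v. Im (quad_form \<Omega> v) = 0"
  shows "\<exists>Y :: 'x cmat. psd Y \<and> psd (kron (mat 1 :: 'r cmat) Y - \<Omega>)"
proof (intro exI conjI)
  show "psd (trace_norm \<Omega> *\<^sub>R mat 1 :: 'x cmat)"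
    by (rule psd_scaleR[OF psd_mat1 trace_norm_nonneg])
  show "psd (kron (mat 1 :: 'r cmat) (trace_norm \<Omega> *\<^sub>R mat 1 :: 'x cmat) - \<Omega>)"
    using psd_trace_norm_shift(1)[OF herm] by (simp add: kron_scaleR_right kron_mat1)
qed

lemma min_trace_le:
  fixes Y :: "'x::finite cmat"
  assumes "psd Y" "psd (kron (mat 1 :: 'r::finite cmat) Y - \<Omega>)"
  shows "min_trace \<Omega> \<le> Re (ctrace Y)"
  unfolding min_trace_def
proof (rule cInf_lower)
  show "bdd_below {Re (ctrace Y) | Y :: 'x cmat. psd Y \<and> psd (kron (mat 1 :: 'r cmat) Y - \<Omega>)}"
    using ctrace_le_of_dominated by (fastforce intro: bdd_belowI)
qed (use assms in blast)

lemma min_trace_ge: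
  assumes "\<And>v. Im (quad_form \<Omega> v) = 0"
  shows "Re (ctrace \<Omega>) / CARD('r) \<le> min_trace (\<Omega> :: ('r::finite \<times> 'x::finite) cmat)"
  unfolding min_trace_def
  using exists_dominating[OF assms] by (intro cInf_greatest) (auto intro: ctrace_le_of_dominated)

lemma min_trace_shift:
  fixes \<Omega> \<Omega>' :: "('r::finite \<times> 'x::finite) cmat"
  assumes herm: "\<And>v. Im (quad_form \<Omega> v) = 0" and Z: "psd Z" and dom: "psd (\<Omega> + kron (mat 1) Z - \<Omega>')"
  shows "min_trace \<Omega>' \<le> min_trace \<Omega> + Re (ctrace Z)"
proof -
  have "min_trace \<Omega>' - Re (ctrace Z) \<le> min_trace \<Omega>"
    unfolding min_trace_def[of \<Omega>]
  proof (rule cInf_greatest)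
    fix y assume "y \<in> {Re (ctrace Y) | Y :: 'x cmat. psd Y \<and> psd (kron (mat 1 :: 'r cmat) Y - \<Omega>)}"
    then obtain Y where Y: "y = Re (ctrace Y)" "psd Y" "psd (kron (mat 1 :: 'r cmat) Y - \<Omega>)" by blast
    have "kron (mat 1 :: 'r cmat) (Y + Z) - \<Omega>' = (kron (mat 1) Y - \<Omega>) + (\<Omega> + kron (mat 1) Z - \<Omega>')"
      by (simp add: kron_add_right algebra_simps)
    then have "psd (kron (mat 1 :: 'r cmat) (Y + Z) - \<Omega>')" using psd_add[OF Y(3) dom] by (simp only:)
    then have "min_trace \<Omega>' \<le> Re (ctrace (Y + Z))" by (rule min_trace_le[OF psd_add[OF Y(2) Z]])
    then show "min_trace \<Omega>' - Re (ctrace Z) \<le> y" unfolding Y(1) by (simp add: ctrace_add)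
  qed (use exists_dominating[OF herm] in blast)
  then show ?thesis by simp
qed

definition twirled_min_trace ::
    "'g measure \<Rightarrow> ('g \<Rightarrow> 'r::finite cmat) \<Rightarrow> ('g \<Rightarrow> 'x::finite cmat) \<Rightarrow> 'x cmat \<Rightarrow> 'r cmat \<Rightarrow> real" where
  "twirled_min_trace M UR UX \<tau> A = min_trace (twirl M UR UX (kron A \<tau>))"

lemma H_eta_eq_twirled_min_trace: "H_eta M UR UX A \<tau> = - log 2 (twirled_min_trace M UR UX \<tau> A)"
  by (simp add: H_eta_def Hmin_eq_min_trace twirled_min_trace_def)

lemma Delta_H_eq_ln_twirled_min_trace:
  "Delta_H M UA UB A \<rho> \<sigma> = (ln (twirled_min_trace M (\<lambda>g. cconj (UB g)) UA \<rho> A)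
     - ln (twirled_min_trace M (\<lambda>g. cconj (UB g)) UB \<sigma> A)) / ln 2"
  by (simp add: Delta_H_def H_eta_eq_twirled_min_trace log_def diff_divide_distrib)

locale twirl_setting = compact_borel_prob M for M :: "'g::topological_space measure" +
  fixes UR :: "'g \<Rightarrow> 'r::finite cmat" and UX :: "'g \<Rightarrow> 'x::finite cmat" and \<tau> :: "'x cmat"
  assumes UR_cont: "continuous_on UNIV UR" and UR_unitary: "\<And>g. unitary (UR g)"
    and UX_cont: "continuous_on UNIV UX" and UX_unitary: "\<And>g. unitary (UX g)"
    and state: "is_state \<tau>"
begin

lemma kron_rep_continuous: "continuous_on UNIV (\<lambda>g. kron (UR g) (UX g))"
  by (rule continuous_on_kron[OF UR_cont UX_cont])

lemma kron_rep_unitary: "unitary (kron (UR g) (UX g))"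
  by (rule unitary_kron[OF UR_unitary UX_unitary])

lemmas twirl_add = conj_average_add[OF kron_rep_continuous kron_rep_unitary, folded twirl_eq_conj_average]
  and twirl_diff = conj_average_diff[OF kron_rep_continuous kron_rep_unitary, folded twirl_eq_conj_average]
  and twirl_scaleR = conj_average_scaleR[OF kron_rep_continuous kron_rep_unitary, folded twirl_eq_conj_average]

lemma psd_twirl_kron: "psd A \<Longrightarrow> psd (twirl M UR UX (kron A \<tau>))"
  using state unfolding twirl_eq_conj_average is_state_def
  by (intro psd_conj_average[OF kron_rep_continuous kron_rep_unitary] psd_kron) auto

lemma ctrace_twirl_kron: "ctrace (twirl M UR UX (kron A \<tau>)) = ctrace A"
  using state unfolding twirl_eq_conj_average is_state_def
  by (simp add: ctrace_conj_average[OF kron_rep_continuous kron_rep_unitary] ctrace_kron)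

lemma psd_average_state: "psd (conj_average M UX \<tau>)" and ctrace_average_state: "ctrace (conj_average M UX \<tau>) = 1"
  using state psd_conj_average[OF UX_cont UX_unitary] ctrace_conj_average[OF UX_cont UX_unitary]
  unfolding is_state_def by auto

lemma twirl_kron_mat1: "twirl M UR UX (kron (mat 1) B) = kron (mat 1) (conj_average M UX B)"
proof -
  have "kron (UR g) (UX g) ** kron (mat 1) B ** cadj (kron (UR g) (UX g))
      = kron (mat 1) (UX g ** B ** cadj (UX g))" for g
    using UR_unitary[of g] unfolding unitary_def by (simp add: cadj_kron kron_mult)
  moreover have "bounded_linear (kron (mat 1 :: 'r cmat) :: 'x cmat \<Rightarrow> _)"
    by (intro linear_conv_bounded_linear[THEN iffD1] linearI) (simp_all add: kron_add_right kron_scaleR_right)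
  ultimately show ?thesis
    unfolding twirl_def conj_average_def
    by (simp add: integral_bounded_linear[OF _ integrable_conj[OF UX_cont UX_unitary]])
qed

lemma twirled_min_trace_ge:
  "psd A \<Longrightarrow> Re (ctrace A) / CARD('r) \<le> twirled_min_trace M UR UX \<tau> A"
  unfolding twirled_min_trace_def
  using min_trace_ge[of "twirl M UR UX (kron A \<tau>)"] psd_twirl_kron by (simp add: psd_iff_quad_form ctrace_twirl_kron)

lemma twirled_min_trace_shift:
  assumes "psd B" "0 \<le> c" "psd (B + c *\<^sub>R mat 1 - A)"
  shows "twirled_min_trace M UR UX \<tau> A \<le> twirled_min_trace M UR UX \<tau> B + c"
proof -
  have "twirl M UR UX (kron B \<tau>) + kron (mat 1) (c *\<^sub>R conj_average M UX \<tau>) - twirl M UR UX (kron A \<tau>)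
      = twirl M UR UX (kron (B + c *\<^sub>R mat 1 - A) \<tau>)"
    by (simp add: kron_add_left kron_diff_left kron_scaleR_left twirl_add twirl_diff twirl_scaleR
        twirl_kron_mat1 kron_scaleR_right)
  then show ?thesis
    using min_trace_shift[of "twirl M UR UX (kron B \<tau>)" "c *\<^sub>R conj_average M UX \<tau>" "twirl M UR UX (kron A \<tau>)"]
      psd_twirl_kron assms psd_scaleR[OF psd_average_state]
    by (simp add: twirled_min_trace_def psd_iff_quad_form ctrace_scaleR ctrace_average_state)
qed

lemma twirled_min_trace_of_card_1:
  assumes "CARD('r) = 1" "psd A"
  shows "twirled_min_trace M UR UX \<tau> A = Re (ctrace A)"
proof (rule antisym)
  have "twirled_min_trace M UR UX \<tau> A \<le> twirled_min_trace M UR UX \<tau> 0 + Re (ctrace A)"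
    using assms psd_eq_ctrace_scalar_of_card_1[OF assms]
    by (intro twirled_min_trace_shift) (simp_all add: psd_zero psd_ctrace_nonneg)
  moreover have "twirled_min_trace M UR UX \<tau> 0 \<le> 0"
  proof -
    have "kron (mat 1 :: 'r cmat) (0 :: 'x cmat) = 0" "kron (0 :: 'r cmat) \<tau> = 0 *\<^sub>R kron 0 \<tau>"
      by (simp_all add: kron_def vec_eq_iff)
    then show ?thesis
      using min_trace_le[OF psd_zero, of "twirl M UR UX (kron 0 \<tau>)"] twirl_scaleR[of 0 "kron 0 \<tau>"]
      by (simp add: twirled_min_trace_def psd_zero ctrace_def)
  qed
  ultimately show "twirled_min_trace M UR UX \<tau> A \<le> Re (ctrace A)" by simp
  show "Re (ctrace A) \<le> twirled_min_trace M UR UX \<tau> A"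
    using twirled_min_trace_ge[OF assms(2)] assms(1) by simp
qed

end

section \<open>Perturbation bounds\<close>

lemma ln_diff_le_of_close:
  fixes d t T F x :: real
  assumes "0 < d" "0 < t" "1 / d \<le> F" "t / d \<le> x" "x \<le> F + T" "F \<le> x + T"
  shows "ln x - ln F \<le> T * d" "ln F - ln x \<le> T * d / t"
proof -
  have "0 < 1 / d" "0 < t / d" using assms(1,2) by simp_all
  then have F_pos: "0 < F" and x_pos: "0 < x" using assms(3,4) by linarith+
  have "0 \<le> T" using assms(5,6) by linarith
  have "ln x - ln F \<le> (x - F) / F" by (rule ln_diff_le[OF x_pos F_pos])
  also have "\<dots> \<le> T / F" using F_pos assms(5) by (simp add: divide_right_mono)
  also have "\<dots> \<le> T / (1 / d)" using \<open>0 \<le> T\<close> F_pos assms(1,3) by (intro divide_left_mono) auto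
  finally show "ln x - ln F \<le> T * d" by simp
  have "ln F - ln x \<le> (F - x) / x" by (rule ln_diff_le[OF F_pos x_pos])
  also have "\<dots> \<le> T / x" using x_pos assms(6) by (simp add: divide_right_mono)
  also have "\<dots> \<le> T / (t / d)" using \<open>0 \<le> T\<close> x_pos assms(1,2,4) by (intro divide_left_mono) auto
  finally show "ln F - ln x \<le> T * d / t" by simp
qed

lemma perturbation_budget:
  fixes \<epsilon> T t d :: real
  assumes eps: "0 \<le> \<epsilon>" "\<epsilon> < 1/2" and T: "0 \<le> T" "T + \<bar>1 - t\<bar> \<le> 2 * \<epsilon>"
    and t: "1 - \<epsilon> \<le> t" and d: "2 \<le> d"
  shows "T * d * (1 + 1 / t) \<le> 2 * d^2 * \<epsilon> / (1 - 2 * \<epsilon>)"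
    and "t = 1 \<Longrightarrow> T * d * (1 + 1 / t) \<le> 2 * d^2 * \<epsilon>"
proof -
  have T_le: "T \<le> 2 * \<epsilon>" using T by linarith
  have eps_d: "4 * \<epsilon> * d \<le> 2 * d^2 * \<epsilon>"
    using mult_right_mono[OF d, of "2 * \<epsilon> * d"] eps d by (simp add: power2_eq_square mult_ac)
  have "1 / t \<le> 1 / (1 - \<epsilon>)" using t eps by (intro divide_left_mono) auto
  also have "\<dots> \<le> (1 + 2 * \<epsilon>) / (1 - 2 * \<epsilon>)"
  proof -
    have "\<epsilon> * (2 * \<epsilon>) \<le> \<epsilon> * 3" using eps by (intro mult_left_mono) auto
    then have "1 - 2 * \<epsilon> \<le> (1 + 2 * \<epsilon>) * (1 - \<epsilon>)" by (simp add: algebra_simps)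
    then show ?thesis using eps by (simp add: divide_simps)
  qed
  also have "\<dots> = 2 / (1 - 2 * \<epsilon>) - 1" using eps by (simp add: field_simps)
  finally have "1 + 1 / t \<le> 2 / (1 - 2 * \<epsilon>)" by simp
  then have "T * d * (1 + 1 / t) \<le> 2 * \<epsilon> * d * (2 / (1 - 2 * \<epsilon>))"
    using T_le T d t eps by (intro mult_mono) auto
  also have "\<dots> \<le> 2 * d^2 * \<epsilon> / (1 - 2 * \<epsilon>)"
    using eps_d eps by (simp add: divide_right_mono)
  finally show "T * d * (1 + 1 / t) \<le> 2 * d^2 * \<epsilon> / (1 - 2 * \<epsilon>)" .
  show "T * d * (1 + 1 / t) \<le> 2 * d^2 * \<epsilon>" if "t = 1"
  proof -
    have "T * d \<le> 2 * \<epsilon> * d" using T_le d by (intro mult_right_mono) auto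
    then show ?thesis using that eps_d by (simp add: mult_ac)
  qed
qed

lemma eps_ball_trace_bounds:
  assumes "is_state \<eta>" "\<eta>' \<in> eps_ball \<epsilon> \<eta>"
  shows "psd \<eta>'" "trace_norm (\<eta> - \<eta>') + \<bar>1 - Re (ctrace \<eta>')\<bar> \<le> 2 * \<epsilon>" "1 - \<epsilon> \<le> Re (ctrace \<eta>')"
proof -
  show "psd \<eta>'" using assms(2) unfolding eps_ball_def is_subnormalized_def by simp
  show budget: "trace_norm (\<eta> - \<eta>') + \<bar>1 - Re (ctrace \<eta>')\<bar> \<le> 2 * \<epsilon>"
    using assms unfolding eps_ball_def gen_trace_dist_def is_state_def by simp
  have "1 - Re (ctrace \<eta>') \<le> cmod (ctrace (\<eta> - \<eta>'))"
    using assms(1) complex_Re_le_cmod[of "ctrace (\<eta> - \<eta>')"] unfolding is_state_def ctrace_diff by simp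
  then show "1 - \<epsilon> \<le> Re (ctrace \<eta>')"
    using cmod_ctrace_le_trace_norm[of "\<eta> - \<eta>'"] budget by linarith
qed

context twirl_setting
begin

lemma ln_twirled_min_trace_perturbation:
  assumes "is_state \<eta>" "psd \<eta>'" "0 < Re (ctrace \<eta>')"
  defines "T \<equiv> trace_norm (\<eta> - \<eta>')" and "t \<equiv> Re (ctrace \<eta>')" and "d \<equiv> real CARD('r)"
  shows "ln (twirled_min_trace M UR UX \<tau> \<eta>') - ln (twirled_min_trace M UR UX \<tau> \<eta>) \<le> T * d"
    and "ln (twirled_min_trace M UR UX \<tau> \<eta>) - ln (twirled_min_trace M UR UX \<tau> \<eta>') \<le> T * d / t"
proof -
  have \<eta>: "psd \<eta>" "ctrace \<eta> = 1" using assms(1) unfolding is_state_def by auto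
  have herm: "Im (quad_form (\<eta> - \<eta>') v) = 0" for v
    using \<eta>(1) assms(2) unfolding psd_iff_quad_form sesq_form_diff_mat by simp
  have "\<eta>' + T *\<^sub>R mat 1 - \<eta> = T *\<^sub>R mat 1 - (\<eta> - \<eta>')" "\<eta> + T *\<^sub>R mat 1 - \<eta>' = T *\<^sub>R mat 1 + (\<eta> - \<eta>')"
    by (simp_all add: algebra_simps)
  then have "psd (\<eta>' + T *\<^sub>R mat 1 - \<eta>)" "psd (\<eta> + T *\<^sub>R mat 1 - \<eta>')"
    unfolding T_def by (simp_all only: psd_trace_norm_shift[OF herm])
  then have close: "twirled_min_trace M UR UX \<tau> \<eta> \<le> twirled_min_trace M UR UX \<tau> \<eta>' + T"
    "twirled_min_trace M UR UX \<tau> \<eta>' \<le> twirled_min_trace M UR UX \<tau> \<eta> + T"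
    using twirled_min_trace_shift \<eta>(1) assms(2) trace_norm_nonneg unfolding T_def by blast+
  have "1 / d \<le> twirled_min_trace M UR UX \<tau> \<eta>" "t / d \<le> twirled_min_trace M UR UX \<tau> \<eta>'"
    using twirled_min_trace_ge[OF \<eta>(1)] twirled_min_trace_ge[OF assms(2)] \<eta>(2) unfolding t_def d_def by simp_all
  then show "ln (twirled_min_trace M UR UX \<tau> \<eta>') - ln (twirled_min_trace M UR UX \<tau> \<eta>) \<le> T * d"
    "ln (twirled_min_trace M UR UX \<tau> \<eta>) - ln (twirled_min_trace M UR UX \<tau> \<eta>') \<le> T * d / t"
    using ln_diff_le_of_close[of d t, OF _ _ _ _ close(2,1)] assms(3) unfolding d_def t_def by simp_all
qed

end

lemma twirl_setting_of_unitary_rep: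
  assumes "compact_group TYPE('g::{t2_space, group_add})" "normalized_haar (M :: 'g measure)"
    "unitary_rep UR" "unitary_rep UX" "is_state \<tau>"
  shows "twirl_setting M UR UX \<tau>"
  using assms unfolding twirl_setting_def twirl_setting_axioms_def compact_borel_prob_def
    compact_borel_prob_axioms_def compact_group_def normalized_haar_def unitary_rep_def
  by auto

lemma Delta_H_perturbation:
  fixes UB :: "'g::topological_space \<Rightarrow> 'b::finite cmat"
  assumes "twirl_setting M (\<lambda>g. cconj (UB g)) UA \<rho>" "twirl_setting M (\<lambda>g. cconj (UB g)) UB \<sigma>"
    and "is_state \<eta>" "psd \<eta>'" "0 < Re (ctrace \<eta>')"
  shows "\<bar>Delta_H M UA UB \<eta>' \<rho> \<sigma> - Delta_H M UA UB \<eta> \<rho> \<sigma>\<bar>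
    \<le> trace_norm (\<eta> - \<eta>') * CARD('b) * (1 + 1 / Re (ctrace \<eta>')) / ln 2"
proof -
  interpret A: twirl_setting M "\<lambda>g. cconj (UB g)" UA \<rho> by fact
  interpret B: twirl_setting M "\<lambda>g. cconj (UB g)" UB \<sigma> by fact
  have "T * d * (1 + 1 / t) = T * d + T * d / t" for T d t :: real by (simp add: algebra_simps)
  then have "\<bar>(ln (twirled_min_trace M (\<lambda>g. cconj (UB g)) UA \<rho> \<eta>') - ln (twirled_min_trace M (\<lambda>g. cconj (UB g)) UB \<sigma> \<eta>'))
      - (ln (twirled_min_trace M (\<lambda>g. cconj (UB g)) UA \<rho> \<eta>) - ln (twirled_min_trace M (\<lambda>g. cconj (UB g)) UB \<sigma> \<eta>))\<bar>
    \<le> trace_norm (\<eta> - \<eta>') * CARD('b) * (1 + 1 / Re (ctrace \<eta>'))"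
    using A.ln_twirled_min_trace_perturbation[OF assms(3-5)] B.ln_twirled_min_trace_perturbation[OF assms(3-5)]
    by (simp add: abs_le_iff)
  then show ?thesis
    unfolding Delta_H_eq_ln_twirled_min_trace diff_divide_distrib[symmetric] abs_divide
    by (simp add: divide_right_mono)
qed

lemma Delta_H_eq_of_card_1:
  fixes UB :: "'g::topological_space \<Rightarrow> 'b::finite cmat"
  assumes "twirl_setting M (\<lambda>g. cconj (UB g)) UA \<rho>" "twirl_setting M (\<lambda>g. cconj (UB g)) UB \<sigma>"
    and "CARD('b) = 1" "psd \<eta>" "psd \<eta>'"
  shows "Delta_H M UA UB \<eta>' \<rho> \<sigma> = Delta_H M UA UB \<eta> \<rho> \<sigma>"
proof -
  interpret A: twirl_setting M "\<lambda>g. cconj (UB g)" UA \<rho> by fact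
  interpret B: twirl_setting M "\<lambda>g. cconj (UB g)" UB \<sigma> by fact
  show ?thesis
    unfolding Delta_H_eq_ln_twirled_min_trace
      A.twirled_min_trace_of_card_1[OF assms(3,4)] A.twirled_min_trace_of_card_1[OF assms(3,5)]
      B.twirled_min_trace_of_card_1[OF assms(3,4)] B.twirled_min_trace_of_card_1[OF assms(3,5)]
    by simp
qed

theorem lemma2:
  fixes M :: "'g::{t2_space, group_add} measure"
    and UA :: "'g \<Rightarrow> 'a::finite cmat"
    and UB :: "'g \<Rightarrow> 'b::finite cmat"
    and \<rho> :: "'a cmat" and \<sigma> :: "'b cmat"
    and \<eta> \<eta>' :: "'b cmat"
    and \<epsilon> :: real
  assumes "compact_group TYPE('g)"
    and "normalized_haar M"
    and "unitary_rep UA" and "unitary_rep UB"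
    and "is_state \<rho>" and "is_state \<sigma>" and "is_state \<eta>"
    and "0 \<le> \<epsilon>" and "\<epsilon> < 1/2"
    and "\<eta>' \<in> eps_ball \<epsilon> \<eta>"
  shows "\<bar>Delta_H M UA UB \<eta>' \<rho> \<sigma> - Delta_H M UA UB \<eta> \<rho> \<sigma>\<bar>
           \<le> 2 * real (CARD('b))^2 * \<epsilon> / (ln 2 * (1 - 2 * \<epsilon>))
         \<and> (ctrace \<eta>' = 1 \<longrightarrow>
         \<bar>Delta_H M UA UB \<eta>' \<rho> \<sigma> - Delta_H M UA UB \<eta> \<rho> \<sigma>\<bar>
           \<le> 2 * real (CARD('b))^2 * \<epsilon> / ln 2)"
proof -
  define T t d where "T = trace_norm (\<eta> - \<eta>')" and "t = Re (ctrace \<eta>')" and "d = real CARD('b)"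
  have settings: "twirl_setting M (\<lambda>g. cconj (UB g)) UA \<rho>" "twirl_setting M (\<lambda>g. cconj (UB g)) UB \<sigma>"
    using assms(1-6) unitary_rep_cconj[OF assms(4)] by (simp_all add: twirl_setting_of_unitary_rep)
  have \<eta>: "psd \<eta>" using assms(7) unfolding is_state_def by simp
  note budget = eps_ball_trace_bounds[OF assms(7,10), folded T_def t_def]
  have "0 < CARD('b)" by simp
  then consider "CARD('b) = 1" | "2 \<le> d" unfolding d_def by linarith
  then show ?thesis
  proof cases
    case 1
    then show ?thesis
      using Delta_H_eq_of_card_1[OF settings 1 \<eta> budget(1)] assms(8,9) by simp
  next
    case 2
    note Delta_bound = Delta_H_perturbation[OF settings assms(7) budget(1), folded T_def t_def d_def]
    have "0 \<le> T" unfolding T_def by (rule trace_norm_nonneg)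
    note bounds = perturbation_budget[OF assms(8,9) this budget(2,3) 2]
    have "t > 0" using budget(3) assms(9) by linarith
    have "T * d * (1 + 1 / t) / ln 2 \<le> 2 * d^2 * \<epsilon> / (1 - 2 * \<epsilon>) / ln 2"
      "t = 1 \<Longrightarrow> T * d * (1 + 1 / t) / ln 2 \<le> 2 * d^2 * \<epsilon> / ln 2"
      by (intro divide_right_mono bounds; simp)+
    then have "\<bar>Delta_H M UA UB \<eta>' \<rho> \<sigma> - Delta_H M UA UB \<eta> \<rho> \<sigma>\<bar> \<le> 2 * d^2 * \<epsilon> / (1 - 2 * \<epsilon>) / ln 2"
      "t = 1 \<Longrightarrow> \<bar>Delta_H M UA UB \<eta>' \<rho> \<sigma> - Delta_H M UA UB \<eta> \<rho> \<sigma>\<bar> \<le> 2 * d^2 * \<epsilon> / ln 2"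
      using Delta_bound[OF \<open>t > 0\<close>] by auto
    then show ?thesis by (simp add: t_def d_def mult.commute)
  qed
qed

end
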